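(* Let $n$ be a positive integer and let $L_2(n)$ denote the number of $2\times n$ Latin rectangles. Then \[ L_2(n)=\sum_{s_{00}+s_{10}+s_{01}+s_{11}=n}(-1)^{s_{10}+s_{01}+2s_{11}}\frac{n!}{s_{00}!\,s_{10}!\,s_{01}!\,s_{11}!}\big[(s_{00}+s_{10})(s_{00}+s_{01})-s_{00}\big]^n, \] where the sum runs over all quadruples of nonnegative integers with sum $n$.
   Context: A $k\times n$ Latin rectangle is a $k\times n$ matrix with entries in $\{1,\dots,n\}$ such that no row and no column contains a repeated entry (so each row is a permutation of $\{1,\dots,n\}$). The convention $0^0=1$ is used. *)

theory Defs
  imports Main
begin

text \<open>A k x n Latin rectangle, represented as a function M :: nat => nat => nat,
  where M i j is the entry in row i (0 <= i < k) and column j (0 <= j < n).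
  Outside the index range the function is fixed to 0, so that rectangles
  correspond bijectively to such functions.\<close>
definition latin_rect :: "nat \<Rightarrow> nat \<Rightarrow> (nat \<Rightarrow> nat \<Rightarrow> nat) \<Rightarrow> bool" where
  "latin_rect k n M \<longleftrightarrow>
     (\<forall>i j. \<not> (i < k \<and> j < n) \<longrightarrow> M i j = 0) \<and>
     (\<forall>i<k. \<forall>j<n. M i j \<in> {1..n}) \<and>
     (\<forall>i<k. inj_on (M i) {0..<n}) \<and>
     (\<forall>j<n. inj_on (\<lambda>i. M i j) {0..<k})"

definition num_latin_rect :: "nat \<Rightarrow> nat \<Rightarrow> nat" where
  "num_latin_rect k n = card {M. latin_rect k n M}"

end

theory Submission
  imports Defs "HOL-Library.FuncSet" "HOL-Combinatorics.Multiset_Permutations"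
begin

text \<open>Read column by column, a 2 x n Latin rectangle is a word of length n over the pairs of
  distinct symbols in which each row contains every symbol. Inclusion-exclusion over the symbols
  missing from row 1 and from row 2 labels each symbol v with a pair of booleans (i, j) recording
  whether v is forbidden in row 1 and in row 2. For a fixed labelling the surviving words are all
  words over the admissible columns, and if sij symbols carry the label (i, j) there are
  (s00 + s10)(s00 + s01) - s00 admissible columns. The summand thus depends only on the class
  sizes, and the labellings with prescribed class sizes are counted by the multinomial
  coefficient.\<close>

lemma UNIV_bool_times_bool:
  "(UNIV :: (bool \<times> bool) set) = {(False, False), (True, False), (False, True), (True, True)}"
  by auto

lemma prod_of_bool:
  "finite A \<Longrightarrow> (\<Prod>x\<in>A. of_bool (P x)) = (of_bool (\<forall>x\<in>A. P x) :: 'a::comm_semiring_1)"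
  by (induction A rule: finite_induct) auto

lemma inj_on_iff_surj_on_equal_card:
  assumes "finite A" "finite B" "card A = card B" "f ` A \<subseteq> B"
  shows "inj_on f A \<longleftrightarrow> B \<subseteq> f ` A"
proof -
  have "inj_on f A \<longleftrightarrow> card (f ` A) = card B"
    using assms(1,3) by (simp add: inj_on_iff_eq_card)
  also have "\<dots> \<longleftrightarrow> f ` A = B"
    using assms(2,4) card_subset_eq by blast
  finally show ?thesis
    using assms(4) by blast
qed

lemma card_off_diagonal:
  assumes "finite A" "finite B"
  shows "card {(x, y) \<in> A \<times> B. x \<noteq> y} + card (A \<inter> B) = card A * card B"
proof -
  let ?off = "{(x, y) \<in> A \<times> B. x \<noteq> y}" and ?diag = "(\<lambda>x. (x, x)) ` (A \<inter> B)"
  have "A \<times> B = ?off \<union> ?diag"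
    by auto
  moreover have "card (?off \<union> ?diag) = card ?off + card ?diag"
    using assms by (auto intro!: card_Un_disjoint intro: finite_subset[of _ "A \<times> B"])
  ultimately have "card (A \<times> B) = card ?off + card ?diag"
    by (simp only:)
  also have "card ?diag = card (A \<inter> B)"
    by (rule card_image) (simp add: inj_on_def)
  finally show ?thesis
    by (simp add: card_cartesian_product)
qed

lemma prod_comp_eq_prod_power_card_fibres:
  fixes \<phi> :: "'a \<Rightarrow> 'b::finite" and g :: "'b \<Rightarrow> 'c::comm_monoid_mult"
  assumes "finite V"
  shows "(\<Prod>v\<in>V. g (\<phi> v)) = (\<Prod>e\<in>UNIV. g e ^ card {v \<in> V. \<phi> v = e})"
proof -
  have "(\<Prod>v\<in>V. g (\<phi> v)) = (\<Prod>e\<in>UNIV. \<Prod>v\<in>{v \<in> V. \<phi> v = e}. g (\<phi> v))"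
    by (rule prod.group[symmetric]) (use assms in auto)
  also have "\<dots> = (\<Prod>e\<in>UNIV. g e ^ card {v \<in> V. \<phi> v = e})"
    by (intro prod.cong refl) simp
  finally show ?thesis .
qed

lemma card_filter_comp_eq_sum_card_fibres:
  fixes \<phi> :: "'a \<Rightarrow> 'b::finite"
  assumes "finite V"
  shows "card {v \<in> V. P (\<phi> v)} = (\<Sum>e\<in>{e. P e}. card {v \<in> V. \<phi> v = e})"
proof -
  have "{v \<in> V. \<phi> v = e} = {v \<in> {v \<in> V. P (\<phi> v)}. \<phi> v = e}" if "P e" for e
    using that by auto
  then have "(\<Sum>e\<in>{e. P e}. card {v \<in> V. \<phi> v = e}) =
      (\<Sum>e\<in>{e. P e}. \<Sum>v\<in>{v \<in> {v \<in> V. P (\<phi> v)}. \<phi> v = e}. 1)"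
    by (intro sum.cong) auto
  also have "\<dots> = (\<Sum>v\<in>{v \<in> V. P (\<phi> v)}. 1)"
    using assms by (intro sum.group) auto
  finally show ?thesis
    by simp
qed

definition distinct_pairs :: "nat \<Rightarrow> (nat \<times> nat) set" where
  "distinct_pairs n = {(x, y). x \<in> {1..n} \<and> y \<in> {1..n} \<and> x \<noteq> y}"

definition covering_columns :: "nat \<Rightarrow> (nat \<Rightarrow> nat \<times> nat) set" where
  "covering_columns n =
     {c \<in> {0..<n} \<rightarrow>\<^sub>E distinct_pairs n.
        \<forall>v\<in>{1..n}. v \<in> fst ` c ` {0..<n} \<and> v \<in> snd ` c ` {0..<n}}"

definition rect_of_columns :: "nat \<Rightarrow> (nat \<Rightarrow> nat \<times> nat) \<Rightarrow> nat \<Rightarrow> nat \<Rightarrow> nat" where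
  "rect_of_columns n c i j =
     (if i = 0 \<and> j < n then fst (c j) else if i = 1 \<and> j < n then snd (c j) else 0)"

lemma latin_rect_2_iff:
  "latin_rect 2 n M \<longleftrightarrow>
     (\<forall>i j. \<not> (i < 2 \<and> j < n) \<longrightarrow> M i j = 0) \<and> (\<forall>i<2. \<forall>j<n. M i j \<in> {1..n}) \<and>
     {1..n} \<subseteq> M 0 ` {0..<n} \<and> {1..n} \<subseteq> M 1 ` {0..<n} \<and> (\<forall>j<n. M 0 j \<noteq> M 1 j)"
proof (cases "\<forall>i<2. \<forall>j<n. M i j \<in> {1..n}")
  case True
  have "inj_on (M i) {0..<n} \<longleftrightarrow> {1..n} \<subseteq> M i ` {0..<n}" if "i < 2" for i
    using True that by (intro inj_on_iff_surj_on_equal_card) auto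
  moreover have "{0..<2::nat} = {0, 1}" and "(\<forall>i<2. P i) \<longleftrightarrow> P 0 \<and> P 1" for P :: "nat \<Rightarrow> bool"
    by (auto simp: less_2_cases_iff)
  ultimately show ?thesis
    unfolding latin_rect_def using True by simp
next
  case False
  then show ?thesis
    unfolding latin_rect_def by blast
qed

lemma latin_rect_2_iff_columns:
  "latin_rect 2 n M \<longleftrightarrow> (\<exists>c \<in> covering_columns n. M = rect_of_columns n c)"
proof
  assume M: "latin_rect 2 n M"
  define c where "c = (\<lambda>j\<in>{0..<n}. (M 0 j, M 1 j))"
  have rows: "fst ` c ` {0..<n} = M 0 ` {0..<n}" "snd ` c ` {0..<n} = M 1 ` {0..<n}"
    by (force simp: c_def)+
  have "M = rect_of_columns n c"
    using M by (auto simp: latin_rect_2_iff rect_of_columns_def c_def less_2_cases_iff fun_eq_iff)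
  moreover have "c \<in> covering_columns n"
    using M rows by (auto simp: latin_rect_2_iff covering_columns_def distinct_pairs_def c_def)
  ultimately show "\<exists>c \<in> covering_columns n. M = rect_of_columns n c"
    by blast
next
  assume "\<exists>c \<in> covering_columns n. M = rect_of_columns n c"
  then obtain c where c: "c \<in> covering_columns n" and M: "M = rect_of_columns n c"
    by blast
  have "M 0 ` {0..<n} = fst ` c ` {0..<n}" "M 1 ` {0..<n} = snd ` c ` {0..<n}"
    by (force simp: M rect_of_columns_def)+
  moreover have "fst (c j) \<in> {1..n} \<and> snd (c j) \<in> {1..n} \<and> fst (c j) \<noteq> snd (c j)" if "j < n" for j
  proof -
    have "c j \<in> distinct_pairs n"
      using c that by (auto simp: covering_columns_def)
    then show ?thesis
      by (auto simp: distinct_pairs_def)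
  qed
  ultimately show "latin_rect 2 n M"
    using c by (auto simp: latin_rect_2_iff covering_columns_def M rect_of_columns_def less_2_cases_iff)
qed

lemma inj_on_rect_of_columns: "inj_on (rect_of_columns n) ({0..<n} \<rightarrow>\<^sub>E A)"
proof (rule inj_onI)
  fix c d assume c: "c \<in> {0..<n} \<rightarrow>\<^sub>E A" and d: "d \<in> {0..<n} \<rightarrow>\<^sub>E A"
    and eq: "rect_of_columns n c = rect_of_columns n d"
  have "c j = d j" if "j < n" for j
    using fun_cong[OF fun_cong[OF eq, of 0], of j] fun_cong[OF fun_cong[OF eq, of 1], of j] that
    by (simp add: rect_of_columns_def prod_eq_iff)
  then show "c = d"
    using c d by (intro PiE_ext) auto
qed

lemma num_latin_rect_2: "num_latin_rect 2 n = card (covering_columns n)"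
proof -
  have "{M. latin_rect 2 n M} = rect_of_columns n ` covering_columns n"
    using latin_rect_2_iff_columns by blast
  moreover have "inj_on (rect_of_columns n) (covering_columns n)"
    by (rule inj_on_subset[OF inj_on_rect_of_columns]) (auto simp: covering_columns_def)
  ultimately show ?thesis
    by (simp add: num_latin_rect_def card_image)
qed

definition exclusion_sign :: "bool \<times> bool \<Rightarrow> int" where
  "exclusion_sign e = (-1) ^ (of_bool (fst e) + of_bool (snd e))"

definition admissible_columns :: "('v \<times> 'v) set \<Rightarrow> ('v \<Rightarrow> bool \<times> bool) \<Rightarrow> ('v \<times> 'v) set" where
  "admissible_columns D \<phi> = {(x, y) \<in> D. \<not> fst (\<phi> x) \<and> \<not> snd (\<phi> y)}"

lemma of_bool_conj_eq_sum_exclusions: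
  "of_bool (P \<and> Q) =
     (\<Sum>e\<in>UNIV. exclusion_sign e * of_bool ((fst e \<longrightarrow> \<not> P) \<and> (snd e \<longrightarrow> \<not> Q)))"
  by (cases P; cases Q) (simp_all add: UNIV_bool_times_bool exclusion_sign_def)

lemma columns_avoiding_eq_PiE:
  assumes "D \<subseteq> V \<times> V"
  shows "{c \<in> J \<rightarrow>\<^sub>E D. \<forall>v\<in>V. (fst (\<phi> v) \<longrightarrow> v \<notin> fst ` c ` J) \<and> (snd (\<phi> v) \<longrightarrow> v \<notin> snd ` c ` J)}
    = J \<rightarrow>\<^sub>E admissible_columns D \<phi>" (is "?avoiding = J \<rightarrow>\<^sub>E ?admissible")
proof (intro equalityI subsetI)
  fix c assume c: "c \<in> ?avoiding"
  have "c j \<in> ?admissible" if "j \<in> J" for j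
  proof -
    have "c j \<in> D"
      using c that by auto
    then have "fst (c j) \<in> V" "snd (c j) \<in> V"
      using assms by auto
    moreover have "fst (c j) \<in> fst ` c ` J" "snd (c j) \<in> snd ` c ` J"
      using that by auto
    ultimately show ?thesis
      using c \<open>c j \<in> D\<close> by (auto simp: admissible_columns_def split_beta)
  qed
  then show "c \<in> J \<rightarrow>\<^sub>E ?admissible"
    using c by (auto simp: PiE_def Pi_def)
next
  fix c assume c: "c \<in> J \<rightarrow>\<^sub>E ?admissible"
  then have "c \<in> J \<rightarrow>\<^sub>E D"
    by (rule set_mp[OF PiE_mono, rotated]) (auto simp: admissible_columns_def)
  moreover have "\<not> fst (\<phi> (fst (c j)))" "\<not> snd (\<phi> (snd (c j)))" if "j \<in> J" for j
    using PiE_mem[OF c that] by (auto simp: admissible_columns_def)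
  ultimately show "c \<in> ?avoiding"
    by blast
qed

lemma card_row_covering_inclusion_exclusion:
  fixes J :: "'j set" and V :: "'v set" and D :: "('v \<times> 'v) set"
  assumes "finite J" "finite V" "D \<subseteq> V \<times> V"
  shows "int (card {c \<in> J \<rightarrow>\<^sub>E D. \<forall>v\<in>V. v \<in> fst ` c ` J \<and> v \<in> snd ` c ` J}) =
    (\<Sum>\<phi>\<in>V \<rightarrow>\<^sub>E UNIV. (\<Prod>v\<in>V. exclusion_sign (\<phi> v)) * int (card (admissible_columns D \<phi>)) ^ card J)"
proof -
  define avoids where "avoids c v e \<longleftrightarrow> (fst e \<longrightarrow> v \<notin> fst ` c ` J) \<and> (snd e \<longrightarrow> v \<notin> snd ` c ` J)"
    for c :: "'j \<Rightarrow> 'v \<times> 'v" and v e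
  have "finite D"
    using assms(2,3) finite_subset by blast
  then have fin: "finite (J \<rightarrow>\<^sub>E D)"
    using assms(1) by (simp add: finite_PiE)
  have "int (card {c \<in> J \<rightarrow>\<^sub>E D. \<forall>v\<in>V. v \<in> fst ` c ` J \<and> v \<in> snd ` c ` J}) =
      (\<Sum>c\<in>J \<rightarrow>\<^sub>E D. \<Prod>v\<in>V. of_bool (v \<in> fst ` c ` J \<and> v \<in> snd ` c ` J))"
    using fin assms(2) by (simp add: prod_of_bool Int_def)
  also have "\<dots> = (\<Sum>c\<in>J \<rightarrow>\<^sub>E D. \<Prod>v\<in>V. \<Sum>e\<in>UNIV. exclusion_sign e * of_bool (avoids c v e))"
    unfolding avoids_def by (subst of_bool_conj_eq_sum_exclusions) (rule refl)
  also have "\<dots> = (\<Sum>c\<in>J \<rightarrow>\<^sub>E D. \<Sum>\<phi>\<in>V \<rightarrow>\<^sub>E UNIV. \<Prod>v\<in>V. exclusion_sign (\<phi> v) * of_bool (avoids c v (\<phi> v)))"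
    using assms(2) by (simp only: prod_sum_PiE finite)
  also have "\<dots> = (\<Sum>\<phi>\<in>V \<rightarrow>\<^sub>E UNIV. \<Sum>c\<in>J \<rightarrow>\<^sub>E D. \<Prod>v\<in>V. exclusion_sign (\<phi> v) * of_bool (avoids c v (\<phi> v)))"
    by (rule sum.swap)
  also have "\<dots> = (\<Sum>\<phi>\<in>V \<rightarrow>\<^sub>E UNIV. (\<Prod>v\<in>V. exclusion_sign (\<phi> v)) *
      int (card {c \<in> J \<rightarrow>\<^sub>E D. \<forall>v\<in>V. avoids c v (\<phi> v)}))"
    using fin assms(2) by (simp add: prod.distrib prod_of_bool Int_def flip: sum_distrib_left)
  also have "\<dots> = (\<Sum>\<phi>\<in>V \<rightarrow>\<^sub>E UNIV. (\<Prod>v\<in>V. exclusion_sign (\<phi> v)) *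
      int (card (admissible_columns D \<phi>)) ^ card J)"
    unfolding avoids_def columns_avoiding_eq_PiE[OF assms(3)] using assms(1) by (simp add: card_PiE)
  finally show ?thesis .
qed

definition venn_sizes :: "'a set \<Rightarrow> ('a \<Rightarrow> bool \<times> bool) \<Rightarrow> nat \<times> nat \<times> nat \<times> nat" where
  "venn_sizes V \<phi> =
     (card {v \<in> V. \<phi> v = (False, False)}, card {v \<in> V. \<phi> v = (True, False)},
      card {v \<in> V. \<phi> v = (False, True)}, card {v \<in> V. \<phi> v = (True, True)})"

lemma prod_exclusion_signs:
  assumes "finite V"
  shows "(\<Prod>v\<in>V. exclusion_sign (\<phi> v)) =
    (case venn_sizes V \<phi> of (s00, s10, s01, s11) \<Rightarrow> (-1) ^ (s10 + s01 + 2 * s11))"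
  using prod_comp_eq_prod_power_card_fibres[OF assms, of exclusion_sign \<phi>]
  by (simp add: venn_sizes_def exclusion_sign_def UNIV_bool_times_bool power_add power_mult)

lemma int_card_admissible_distinct_pairs:
  "int (card (admissible_columns (distinct_pairs n) \<phi>)) =
    (case venn_sizes {1..n} \<phi> of (s00, s10, s01, s11) \<Rightarrow> int ((s00 + s10) * (s00 + s01)) - int s00)"
proof -
  let ?A = "{x \<in> {1..n}. \<not> fst (\<phi> x)}" and ?B = "{y \<in> {1..n}. \<not> snd (\<phi> y)}"
  let ?s = "\<lambda>e. card {v \<in> {1..n}. \<phi> v = e}"
  have "{e::bool \<times> bool. \<not> fst e} = {(False, False), (False, True)}"
    and "{e::bool \<times> bool. \<not> snd e} = {(False, False), (True, False)}"
    by auto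
  then have "card ?A = ?s (False, False) + ?s (False, True)"
    and "card ?B = ?s (False, False) + ?s (True, False)"
    using card_filter_comp_eq_sum_card_fibres[of "{1..n}" "\<lambda>e. \<not> fst e" \<phi>]
      card_filter_comp_eq_sum_card_fibres[of "{1..n}" "\<lambda>e. \<not> snd e" \<phi>]
    by simp_all
  moreover have "?A \<inter> ?B = {x \<in> {1..n}. \<phi> x = (False, False)}"
    by (auto simp: prod_eq_iff)
  moreover have "admissible_columns (distinct_pairs n) \<phi> = {(x, y) \<in> ?A \<times> ?B. x \<noteq> y}"
    by (auto simp: admissible_columns_def distinct_pairs_def)
  ultimately have "card (admissible_columns (distinct_pairs n) \<phi>) + ?s (False, False) =
      (?s (False, False) + ?s (True, False)) * (?s (False, False) + ?s (False, True))"
    using card_off_diagonal[of ?A ?B] by (simp add: mult.commute)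
  then show ?thesis
    unfolding venn_sizes_def prod.case by linarith
qed

definition venn_mset :: "nat \<times> nat \<times> nat \<times> nat \<Rightarrow> (bool \<times> bool) multiset" where
  "venn_mset q = (case q of (s00, s10, s01, s11) \<Rightarrow>
     replicate_mset s00 (False, False) + replicate_mset s10 (True, False) +
     replicate_mset s01 (False, True) + replicate_mset s11 (True, True))"

lemma eq_venn_mset_iff:
  "M = venn_mset (s00, s10, s01, s11) \<longleftrightarrow>
     (count M (False, False), count M (True, False), count M (False, True), count M (True, True)) =
     (s00, s10, s01, s11)"
proof
  assume counts: "(count M (False, False), count M (True, False), count M (False, True),
    count M (True, True)) = (s00, s10, s01, s11)"
  show "M = venn_mset (s00, s10, s01, s11)"
  proof (rule multiset_eqI)
    fix e :: "bool \<times> bool"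
    show "count M e = count (venn_mset (s00, s10, s01, s11)) e"
      using counts by (cases e) (auto simp: venn_mset_def)
  qed
qed (simp add: venn_mset_def)

lemma card_permutations_of_venn_mset:
  "card (permutations_of_multiset (venn_mset (s00, s10, s01, s11))) =
     fact (s00 + s10 + s01 + s11) div (fact s00 * fact s10 * fact s01 * fact s11)"
proof -
  let ?M = "venn_mset (s00, s10, s01, s11)"
  have "(\<Prod>e\<in>set_mset ?M. fact (count ?M e)) = (\<Prod>e\<in>UNIV. fact (count ?M e) :: nat)"
    by (rule prod.mono_neutral_left) (auto simp: not_in_iff)
  also have "\<dots> = fact s00 * fact s10 * fact s01 * fact s11"
    by (simp add: UNIV_bool_times_bool venn_mset_def)
  finally show ?thesis
    by (simp add: card_permutations_of_multiset venn_mset_def)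
qed

lemma bij_betw_PiE_lists:
  "bij_betw (\<lambda>\<phi>. map \<phi> [a..<b]) ({a..<b} \<rightarrow>\<^sub>E K) {xs. length xs = b - a \<and> set xs \<subseteq> K}"
proof (rule bij_betw_byWitness[where f' = "\<lambda>xs. \<lambda>v\<in>{a..<b}. xs ! (v - a)"])
  show "\<forall>\<phi>\<in>{a..<b} \<rightarrow>\<^sub>E K. (\<lambda>v\<in>{a..<b}. map \<phi> [a..<b] ! (v - a)) = \<phi>"
    by (auto simp: fun_eq_iff PiE_def extensional_def)
  show "\<forall>xs\<in>{xs. length xs = b - a \<and> set xs \<subseteq> K}. map (\<lambda>v\<in>{a..<b}. xs ! (v - a)) [a..<b] = xs"
    by (auto intro!: nth_equalityI)
  show "(\<lambda>\<phi>. map \<phi> [a..<b]) ` ({a..<b} \<rightarrow>\<^sub>E K) \<subseteq> {xs. length xs = b - a \<and> set xs \<subseteq> K}"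
    by (auto simp: PiE_def Pi_def)
  show "(\<lambda>xs. \<lambda>v\<in>{a..<b}. xs ! (v - a)) ` {xs. length xs = b - a \<and> set xs \<subseteq> K} \<subseteq> {a..<b} \<rightarrow>\<^sub>E K"
    by (auto intro!: subsetD[OF _ nth_mem])
qed

lemma count_mset_map_upt: "count (mset (map \<phi> [a..<b])) e = card {v \<in> {a..<b}. \<phi> v = e}"
proof -
  have "count (mset (map \<phi> [a..<b])) e = length (filter (\<lambda>v. \<phi> v = e) [a..<b])"
    unfolding count_mset count_list_eq_length_filter filter_map o_def by (simp only: eq_commute length_map)
  also have "\<dots> = card {v \<in> {a..<b}. \<phi> v = e}"
    by (subst distinct_length_filter) (auto intro: arg_cong[where f = card])
  finally show ?thesis .
qed

lemma card_labellings_with_venn_sizes: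
  assumes "s00 + s10 + s01 + s11 = b - a"
  shows "card {\<phi> \<in> {a..<b} \<rightarrow>\<^sub>E UNIV. venn_sizes {a..<b} \<phi> = (s00, s10, s01, s11)} =
    fact (b - a) div (fact s00 * fact s10 * fact s01 * fact s11)"
proof -
  let ?q = "(s00, s10, s01, s11)"
  have "bij_betw (\<lambda>\<phi>. map \<phi> [a..<b]) {\<phi> \<in> {a..<b} \<rightarrow>\<^sub>E UNIV. venn_sizes {a..<b} \<phi> = ?q}
      {xs \<in> {xs. length xs = b - a \<and> set xs \<subseteq> UNIV}. mset xs = venn_mset ?q}"
    by (rule bij_betw_Collect[OF bij_betw_PiE_lists])
      (simp only: eq_venn_mset_iff count_mset_map_upt venn_sizes_def)
  moreover have "{xs \<in> {xs. length xs = b - a \<and> set xs \<subseteq> UNIV}. mset xs = venn_mset ?q} =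
      permutations_of_multiset (venn_mset ?q)"
    using assms by (auto simp: permutations_of_multiset_def venn_mset_def dest: arg_cong[where f = size])
  ultimately show ?thesis
    using assms by (simp add: bij_betw_same_card card_permutations_of_venn_mset)
qed

lemma finite_quadruples_sum_eq: "finite {(s00, s10, s01, s11). s00 + s10 + s01 + s11 = (n::nat)}"
  by (rule finite_subset[of _ "{0..n} \<times> {0..n} \<times> {0..n} \<times> {0..n}"]) auto

lemma venn_sizes_sum_eq_card:
  assumes "finite V" "venn_sizes V \<phi> = (s00, s10, s01, s11)"
  shows "s00 + s10 + s01 + s11 = card V"
  using assms card_filter_comp_eq_sum_card_fibres[OF assms(1), of "\<lambda>_. True" \<phi>]
  by (simp add: venn_sizes_def UNIV_bool_times_bool)

lemma sum_PiE_group_venn_sizes: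
  fixes G :: "nat \<times> nat \<times> nat \<times> nat \<Rightarrow> 'a::comm_semiring_1"
  shows "(\<Sum>\<phi>\<in>{a..<b} \<rightarrow>\<^sub>E UNIV. G (venn_sizes {a..<b} \<phi>)) =
    (\<Sum>(s00, s10, s01, s11) \<in> {(s00, s10, s01, s11). s00 + s10 + s01 + s11 = b - a}.
       of_nat (fact (b - a) div (fact s00 * fact s10 * fact s01 * fact s11)) * G (s00, s10, s01, s11))"
proof -
  let ?Q = "{(s00, s10, s01, s11). s00 + s10 + s01 + s11 = b - a}"
  have range: "venn_sizes {a..<b} \<phi> \<in> ?Q" for \<phi>
    using venn_sizes_sum_eq_card[of "{a..<b}" \<phi>] by (cases "venn_sizes {a..<b} \<phi>") auto
  have "(\<Sum>\<phi>\<in>{a..<b} \<rightarrow>\<^sub>E UNIV. G (venn_sizes {a..<b} \<phi>)) =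
      (\<Sum>q\<in>?Q. \<Sum>\<phi>\<in>{\<phi> \<in> {a..<b} \<rightarrow>\<^sub>E UNIV. venn_sizes {a..<b} \<phi> = q}. G (venn_sizes {a..<b} \<phi>))"
    by (rule sum.group[symmetric])
      (use range in \<open>auto simp: finite_PiE finite_quadruples_sum_eq image_subset_iff\<close>)
  also have "\<dots> = (\<Sum>q\<in>?Q. of_nat (card {\<phi> \<in> {a..<b} \<rightarrow>\<^sub>E UNIV. venn_sizes {a..<b} \<phi> = q}) * G q)"
    by (intro sum.cong refl) simp
  also have "\<dots> = (\<Sum>(s00, s10, s01, s11) \<in> ?Q.
       of_nat (fact (b - a) div (fact s00 * fact s10 * fact s01 * fact s11)) * G (s00, s10, s01, s11))"
    by (intro sum.cong refl) (auto simp: card_labellings_with_venn_sizes)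
  finally show ?thesis .
qed

theorem mainTheorem2:
  fixes n :: nat
  assumes "n \<ge> 1"
  shows "int (num_latin_rect 2 n) =
    (\<Sum>(s00, s10, s01, s11) \<in> {(a, b, c, d). a + b + c + d = n}.
       (-1) ^ (s10 + s01 + 2 * s11) *
       int (fact n div (fact s00 * fact s10 * fact s01 * fact s11)) *
       (int ((s00 + s10) * (s00 + s01)) - int s00) ^ n)"
proof -
  define G :: "nat \<times> nat \<times> nat \<times> nat \<Rightarrow> int" where
    "G = (\<lambda>(s00, s10, s01, s11). (-1) ^ (s10 + s01 + 2 * s11) * (int ((s00 + s10) * (s00 + s01)) - int s00) ^ n)"
  have "int (num_latin_rect 2 n) =
      (\<Sum>\<phi>\<in>{1..n} \<rightarrow>\<^sub>E UNIV. (\<Prod>v\<in>{1..n}. exclusion_sign (\<phi> v)) *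
         int (card (admissible_columns (distinct_pairs n) \<phi>)) ^ n)"
    unfolding num_latin_rect_2 covering_columns_def
    by (subst card_row_covering_inclusion_exclusion) (auto simp: distinct_pairs_def)
  also have "\<dots> = (\<Sum>\<phi>\<in>{1..<Suc n} \<rightarrow>\<^sub>E UNIV. G (venn_sizes {1..<Suc n} \<phi>))"
    by (intro sum.cong) (auto simp: G_def prod_exclusion_signs int_card_admissible_distinct_pairs
        atLeastLessThanSuc_atLeastAtMost split: prod.split)
  also have "\<dots> = (\<Sum>(s00, s10, s01, s11) \<in> {(a, b, c, d). a + b + c + d = n}.
       int (fact n div (fact s00 * fact s10 * fact s01 * fact s11)) * G (s00, s10, s01, s11))"
    by (simp add: sum_PiE_group_venn_sizes)
  finally show ?thesis
    by (simp add: G_def mult_ac)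
qed

end
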